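(* If $n\ge3$, then the kernel of $\theta:FVB_n\to{\rm Aut}(F_{2n})$ is nontrivial.
   Context: $FVB_n$ is the flat virtual braid group: generators $\sigma_1,\dots,\sigma_{n-1},\rho_1,\dots,\rho_{n-1}$, relations $\sigma_i\sigma_j=\sigma_j\sigma_i$ and $\rho_i\rho_j=\rho_j\rho_i$ and $\sigma_i\rho_j=\rho_j\sigma_i$ for $|i-j|\ge2$; $\sigma_i\sigma_{i+1}\sigma_i=\sigma_{i+1}\sigma_i\sigma_{i+1}$; $\rho_i\rho_{i+1}\rho_i=\rho_{i+1}\rho_i\rho_{i+1}$; $\rho_i\rho_{i+1}\sigma_i=\sigma_{i+1}\rho_i\rho_{i+1}$; $\rho_i^2=\sigma_i^2=1$. $F_{2n}$ is free on $x_1,\dots,x_n,y_1,\dots,y_n$ and $\theta$ is the homomorphism with $\theta(\sigma_i):x_i\mapsto x_{i+1}y_{i+1},\ x_{i+1}\mapsto x_iy_{i+1}^{-1}$ and $\theta(\rho_i):x_i\leftrightarrow x_{i+1},\ y_i\leftrightarrow y_{i+1}$ (swapping), all other generators fixed; automorphisms compose on the right, $(fg)(x)=g(f(x))$. *)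

theory Defs
  imports Main
begin

(* Words in a group presentation: letters are (generator, sign), True = positive, False = inverse. *)
type_synonym 'a letter = "'a \<times> bool"

definition pos :: "'a \<Rightarrow> 'a letter" where "pos a = (a, True)"
definition neg :: "'a \<Rightarrow> 'a letter" where "neg a = (a, False)"

definition inv_word :: "'a letter list \<Rightarrow> 'a letter list" where
  "inv_word w = rev (map (\<lambda>(a, b). (a, \<not> b)) w)"

inductive pres_eq :: "'a set \<Rightarrow> 'a letter list set \<Rightarrow> 'a letter list \<Rightarrow> 'a letter list \<Rightarrow> bool"
  for A R where
  refl: "pres_eq A R w w"
| sym: "pres_eq A R u v \<Longrightarrow> pres_eq A R v u"
| trans: "pres_eq A R u v \<Longrightarrow> pres_eq A R v w \<Longrightarrow> pres_eq A R u w"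
| cancel: "a \<in> A \<Longrightarrow> pres_eq A R (u @ [(a, b), (a, \<not> b)] @ v) (u @ v)"
| rel: "r \<in> R \<Longrightarrow> pres_eq A R (u @ r @ v) (u @ v)"

datatype fvb_gen = Sig nat | Rho nat

fun fvb_idx :: "fvb_gen \<Rightarrow> nat" where
  "fvb_idx (Sig i) = i" | "fvb_idx (Rho i) = i"

definition fvb_gens :: "nat \<Rightarrow> fvb_gen set" where
  "fvb_gens n = {g. 1 \<le> fvb_idx g \<and> fvb_idx g \<le> n - 1}"

(* relation a = b is encoded by the relator a b^{-1} *)
definition fvb_relators :: "nat \<Rightarrow> fvb_gen letter list set" where
  "fvb_relators n =
     {[pos (Sig i), pos (Sig j), neg (Sig i), neg (Sig j)] | i j.
        1 \<le> i \<and> i \<le> n - 1 \<and> 1 \<le> j \<and> j \<le> n - 1 \<and> (i \<ge> j + 2 \<or> j \<ge> i + 2)}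
   \<union> {[pos (Rho i), pos (Rho j), neg (Rho i), neg (Rho j)] | i j.
        1 \<le> i \<and> i \<le> n - 1 \<and> 1 \<le> j \<and> j \<le> n - 1 \<and> (i \<ge> j + 2 \<or> j \<ge> i + 2)}
   \<union> {[pos (Sig i), pos (Rho j), neg (Sig i), neg (Rho j)] | i j.
        1 \<le> i \<and> i \<le> n - 1 \<and> 1 \<le> j \<and> j \<le> n - 1 \<and> (i \<ge> j + 2 \<or> j \<ge> i + 2)}
   \<union> {[pos (Sig i), pos (Sig (i+1)), pos (Sig i), neg (Sig (i+1)), neg (Sig i), neg (Sig (i+1))] | i.
        1 \<le> i \<and> i + 1 \<le> n - 1}
   \<union> {[pos (Rho i), pos (Rho (i+1)), pos (Rho i), neg (Rho (i+1)), neg (Rho i), neg (Rho (i+1))] | i.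
        1 \<le> i \<and> i + 1 \<le> n - 1}
   \<union> {[pos (Rho i), pos (Rho (i+1)), pos (Sig i), neg (Rho (i+1)), neg (Rho i), neg (Sig (i+1))] | i.
        1 \<le> i \<and> i + 1 \<le> n - 1}
   \<union> {[pos (Sig i), pos (Sig i)] | i. 1 \<le> i \<and> i \<le> n - 1}
   \<union> {[pos (Rho i), pos (Rho i)] | i. 1 \<le> i \<and> i \<le> n - 1}"

definition fvb_eq :: "nat \<Rightarrow> fvb_gen letter list \<Rightarrow> fvb_gen letter list \<Rightarrow> bool" where
  "fvb_eq n = pres_eq (fvb_gens n) (fvb_relators n)"

definition fvb_word :: "nat \<Rightarrow> fvb_gen letter list \<Rightarrow> bool" where
  "fvb_word n w \<longleftrightarrow> (\<forall>l \<in> set w. fst l \<in> fvb_gens n)"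

datatype fgen = X nat | Y nat

fun fgen_idx :: "fgen \<Rightarrow> nat" where
  "fgen_idx (X i) = i" | "fgen_idx (Y i) = i"

definition free_gens :: "nat \<Rightarrow> fgen set" where
  "free_gens n = {g. 1 \<le> fgen_idx g \<and> fgen_idx g \<le> n}"

definition free_eq :: "nat \<Rightarrow> fgen letter list \<Rightarrow> fgen letter list \<Rightarrow> bool" where
  "free_eq n = pres_eq (free_gens n) {}"

fun theta_gen :: "fvb_gen \<Rightarrow> fgen \<Rightarrow> fgen letter list" where
  "theta_gen (Sig i) g =
     (if g = X i then [pos (X (i+1)), pos (Y (i+1))]
      else if g = X (i+1) then [pos (X i), neg (Y (i+1))]
      else [pos g])"
| "theta_gen (Rho i) g =
     (if g = X i then [pos (X (i+1))]
      else if g = X (i+1) then [pos (X i)]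
      else if g = Y i then [pos (Y (i+1))]
      else if g = Y (i+1) then [pos (Y i)]
      else [pos g])"

definition subst :: "(fgen \<Rightarrow> fgen letter list) \<Rightarrow> fgen letter list \<Rightarrow> fgen letter list" where
  "subst f w = concat (map (\<lambda>(g, b). if b then f g else inv_word (f g)) w)"

(* theta of a word, with right composition (fg)(x) = g(f(x)):
   theta(a_1 ... a_k)(x) = theta(a_k)(... theta(a_1)(x)).
   theta(s^{-1}) = theta(s)^{-1} = theta(s), since s^2 = 1 in FVB_n and theta(s) is an involution. *)
definition theta_word :: "fvb_gen letter list \<Rightarrow> fgen \<Rightarrow> fgen letter list" where
  "theta_word w x = fold (\<lambda>l u. subst (theta_gen (fst l)) u) w [pos x]"

end

theory Submission
  imports Defs
begin

text \<open>The element \<open>(\<rho>\<^sub>1\<sigma>\<^sub>1\<rho>\<^sub>1\<sigma>\<^sub>2)\<^sup>3\<close> lies in the kernel: a direct computation shows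
  that its image fixes every generator of \<open>F\<^sub>2\<^sub>n\<close> up to free cancellation. It is nontrivial
  in \<open>FVB\<^sub>n\<close> because \<open>FVB\<^sub>n\<close> acts on triples \<open>(b, c, p)\<close>: both \<open>\<rho>\<^sub>i\<close> and \<open>\<sigma>\<^sub>i\<close> move
  the positions \<open>b\<close>, \<open>c\<close> of two tracked strands by the transposition \<open>(i i+1)\<close>, and
  \<open>\<sigma>\<^sub>i\<close> moreover adds to \<open>p\<close> the sign of the crossing of the tracked strands, if they are the
  two strands at \<open>i\<close> and \<open>i + 1\<close>. All defining relations act trivially, but the element sends
  \<open>(1, 2, 0)\<close> to \<open>(1, 2, -2)\<close>.\<close>

lemma pres_eq_imp_fold_eq:
  assumes "pres_eq A R u v"
    and "\<And>a s. a \<in> A \<Longrightarrow> f a (f a s) = s"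
    and "\<And>r s. r \<in> R \<Longrightarrow> fold (\<lambda>l. f (fst l)) r s = s"
  shows "fold (\<lambda>l. f (fst l)) u s = fold (\<lambda>l. f (fst l)) v s"
  using assms(1)
proof (induction arbitrary: s rule: pres_eq.induct)
  case (cancel a u b v)
  then show ?case by (simp add: assms(2))
next
  case (rel r u v)
  then show ?case by (simp add: assms(3))
qed auto

lemma pres_eq_Cons: "pres_eq A R u v \<Longrightarrow> pres_eq A R (x # u) (x # v)"
proof (induction rule: pres_eq.induct)
  case (cancel a u b v)
  then show ?case using pres_eq.cancel[of a A R "x # u" b v] by simp
next
  case (rel r u v)
  then show ?case using pres_eq.rel[of r R A "x # u" v] by simp
qed (blast intro: pres_eq.intros)+

fun free_reduce :: "'a letter list \<Rightarrow> 'a letter list" where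
  "free_reduce [] = []"
| "free_reduce (x # xs) =
     (case free_reduce xs of
        [] \<Rightarrow> [x]
      | y # ys \<Rightarrow> (if fst x = fst y \<and> snd x \<noteq> snd y then ys else x # y # ys))"

lemma pres_eq_free_reduce:
  assumes "\<forall>l \<in> set w. fst l \<in> A"
  shows "pres_eq A R w (free_reduce w)"
  using assms
proof (induction w)
  case Nil
  then show ?case by (simp add: pres_eq.refl)
next
  case (Cons x xs)
  have x_xs: "pres_eq A R (x # xs) (x # free_reduce xs)"
    using Cons by (simp add: pres_eq_Cons)
  show ?case
  proof (cases "free_reduce xs")
    case Nil
    then show ?thesis using x_xs by simp
  next
    case (Cons y ys)
    show ?thesis
    proof (cases "fst x = fst y \<and> snd x \<noteq> snd y")
      case True
      obtain a b where x: "x = (a, b)" by (cases x)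
      have y: "y = (a, \<not> b)" using True x by (cases y) auto
      have "a \<in> A" using Cons.prems x by auto
      then have "pres_eq A R ([] @ [(a, b), (a, \<not> b)] @ ys) ([] @ ys)"
        by (rule pres_eq.cancel)
      with x_xs show ?thesis using x y Cons True by (auto intro: pres_eq.trans)
    next
      case False
      then show ?thesis using x_xs Cons by auto
    qed
  qed
qed

definition swap_adjacent :: "nat \<Rightarrow> nat \<Rightarrow> nat" where
  "swap_adjacent i a = (if a = i then i + 1 else if a = i + 1 then i else a)"

lemma swap_adjacent_involutory [simp]: "swap_adjacent i (swap_adjacent i a) = a"
  by (simp add: swap_adjacent_def)

lemma swap_adjacent_commute:
  "i + 2 \<le> j \<or> j + 2 \<le> i \<Longrightarrow>
   swap_adjacent i (swap_adjacent j a) = swap_adjacent j (swap_adjacent i a)"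
  by (auto simp: swap_adjacent_def)

lemma swap_adjacent_braid:
  "swap_adjacent i (swap_adjacent (Suc i) (swap_adjacent i a)) =
   swap_adjacent (Suc i) (swap_adjacent i (swap_adjacent (Suc i) a))"
  by (simp add: swap_adjacent_def)

definition crossing :: "nat \<Rightarrow> nat \<Rightarrow> nat \<Rightarrow> int" where
  "crossing i b c = (if b = i \<and> c = i + 1 then 1 else if b = i + 1 \<and> c = i then -1 else 0)"

lemma crossing_swap_adjacent_self:
  "crossing i (swap_adjacent i b) (swap_adjacent i c) = - crossing i b c"
  by (auto simp: crossing_def swap_adjacent_def)

lemma crossing_swap_adjacent_far:
  "i + 2 \<le> j \<or> j + 2 \<le> i \<Longrightarrow> crossing i (swap_adjacent j b) (swap_adjacent j c) = crossing i b c"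
  by (auto simp: crossing_def swap_adjacent_def)

lemma crossing_braid:
  "crossing i b c + crossing (Suc i) (swap_adjacent i b) (swap_adjacent i c)
     + crossing i (swap_adjacent (Suc i) (swap_adjacent i b)) (swap_adjacent (Suc i) (swap_adjacent i c)) =
   crossing (Suc i) b c + crossing i (swap_adjacent (Suc i) b) (swap_adjacent (Suc i) c)
     + crossing (Suc i) (swap_adjacent i (swap_adjacent (Suc i) b)) (swap_adjacent i (swap_adjacent (Suc i) c))"
  by (simp add: crossing_def swap_adjacent_def)

lemma crossing_mixed:
  "crossing i (swap_adjacent (Suc i) (swap_adjacent i b)) (swap_adjacent (Suc i) (swap_adjacent i c)) =
   crossing (Suc i) b c"
  by (simp add: crossing_def swap_adjacent_def)

fun strand_act :: "fvb_gen \<Rightarrow> nat \<times> nat \<times> int \<Rightarrow> nat \<times> nat \<times> int" where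
  "strand_act (Rho i) (b, c, p) = (swap_adjacent i b, swap_adjacent i c, p)"
| "strand_act (Sig i) (b, c, p) = (swap_adjacent i b, swap_adjacent i c, p + crossing i b c)"

abbreviation strand_act_word :: "fvb_gen letter list \<Rightarrow> nat \<times> nat \<times> int \<Rightarrow> nat \<times> nat \<times> int" where
  "strand_act_word \<equiv> fold (\<lambda>l. strand_act (fst l))"

lemma strand_act_involutory: "strand_act g (strand_act g s) = s"
  by (cases g; cases s) (simp_all add: crossing_swap_adjacent_self)

lemma strand_act_commute:
  assumes "fvb_idx g + 2 \<le> fvb_idx h \<or> fvb_idx h + 2 \<le> fvb_idx g"
  shows "strand_act g (strand_act h s) = strand_act h (strand_act g s)"
  using assms
  by (cases g; cases h; cases s; elim disjE)
    (simp_all add: swap_adjacent_commute crossing_swap_adjacent_far)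

lemma strand_act_braid_Sig:
  "strand_act (Sig i) (strand_act (Sig (Suc i)) (strand_act (Sig i) s)) =
   strand_act (Sig (Suc i)) (strand_act (Sig i) (strand_act (Sig (Suc i)) s))"
proof -
  obtain b c p where "s = (b, c, p)" by (cases s)
  with crossing_braid[of i b c] show ?thesis by (simp add: swap_adjacent_braid)
qed

lemma strand_act_braid_Rho:
  "strand_act (Rho i) (strand_act (Rho (Suc i)) (strand_act (Rho i) s)) =
   strand_act (Rho (Suc i)) (strand_act (Rho i) (strand_act (Rho (Suc i)) s))"
  by (cases s) (simp add: swap_adjacent_braid)

text \<open>Innermost letters act first, so this is the relation \<open>\<rho>\<^sub>i\<rho>\<^sub>i\<^sub>+\<^sub>1\<sigma>\<^sub>i = \<sigma>\<^sub>i\<^sub>+\<^sub>1\<rho>\<^sub>i\<rho>\<^sub>i\<^sub>+\<^sub>1\<close>.\<close>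

lemma strand_act_mixed:
  "strand_act (Sig i) (strand_act (Rho (Suc i)) (strand_act (Rho i) s)) =
   strand_act (Rho (Suc i)) (strand_act (Rho i) (strand_act (Sig (Suc i)) s))"
  by (cases s) (simp add: swap_adjacent_braid crossing_mixed)

lemma strand_act_relator:
  assumes "r \<in> fvb_relators n"
  shows "strand_act_word r s = s"
proof -
  have commutator: "strand_act h (strand_act g (strand_act h (strand_act g s))) = s"
    if "fvb_idx g + 2 \<le> fvb_idx h \<or> fvb_idx h + 2 \<le> fvb_idx g" for g h
    using strand_act_commute[OF that, of "strand_act h (strand_act g s)"]
    by (simp add: strand_act_involutory)
  show ?thesis
    using assms unfolding fvb_relators_def
    by (elim UnE CollectE exE conjE disjE; simp del: strand_act.simps
        add: pos_def neg_def commutator strand_act_involutory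
          strand_act_braid_Sig strand_act_braid_Rho strand_act_mixed)
qed

lemma fvb_eq_imp_strand_act_word_eq:
  "fvb_eq n u v \<Longrightarrow> strand_act_word u s = strand_act_word v s"
  unfolding fvb_eq_def
  by (erule pres_eq_imp_fold_eq) (simp_all add: strand_act_involutory strand_act_relator)

lemma theta_gen_far:
  "fgen_idx g \<notin> {fvb_idx h, fvb_idx h + 1} \<Longrightarrow> theta_gen h g = [pos g]"
  by (cases h; cases g) auto

lemma theta_word_far:
  assumes "\<forall>l \<in> set w. fgen_idx g \<notin> {fvb_idx (fst l), fvb_idx (fst l) + 1}"
  shows "theta_word w g = [pos g]"
proof -
  have "fold (\<lambda>l u. subst (theta_gen (fst l)) u) w [pos g] = [pos g]"
    using assms by (induction w) (simp_all add: theta_gen_far subst_def pos_def)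
  then show ?thesis by (simp add: theta_word_def)
qed

definition fvb_kernel_word :: "fvb_gen letter list" where
  "fvb_kernel_word = concat (replicate 3 [pos (Rho 1), pos (Sig 1), pos (Rho 1), pos (Sig 2)])"

lemma set_fvb_kernel_word: "set fvb_kernel_word = {pos (Rho 1), pos (Sig 1), pos (Sig 2)}"
  by (auto simp: fvb_kernel_word_def numeral_eq_Suc)

lemma fvb_word_kernel_word: "n \<ge> 3 \<Longrightarrow> fvb_word n fvb_kernel_word"
  by (auto simp: fvb_word_def set_fvb_kernel_word pos_def fvb_gens_def)

lemma fvb_kernel_word_nontrivial: "\<not> fvb_eq n fvb_kernel_word []"
proof
  have "strand_act_word fvb_kernel_word (1, 2, 0) = (1, 2, -2)"
    by code_simp
  moreover assume "fvb_eq n fvb_kernel_word []"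
  ultimately show False
    by (auto dest: fvb_eq_imp_strand_act_word_eq[where s = "(1, 2, 0)"])
qed

lemma theta_kernel_word_far: "fgen_idx g \<ge> 4 \<Longrightarrow> theta_word fvb_kernel_word g = [pos g]"
  by (rule theta_word_far) (auto simp: set_fvb_kernel_word pos_def)

lemma theta_kernel_word_near:
  "\<forall>g \<in> {X 1, X 2, X 3, Y 1, Y 2, Y 3}.
     free_reduce (theta_word fvb_kernel_word g) = [pos g] \<and>
     (\<forall>l \<in> set (theta_word fvb_kernel_word g). 1 \<le> fgen_idx (fst l) \<and> fgen_idx (fst l) \<le> 3)"
  by code_simp

theorem proposition8:
  fixes n :: nat
  assumes "n \<ge> 3"
  shows "\<exists>w. fvb_word n w \<and> \<not> fvb_eq n w [] \<and>
           (\<forall>g \<in> free_gens n. free_eq n (theta_word w g) [pos g])"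
proof (intro exI conjI ballI)
  show "fvb_word n fvb_kernel_word" using assms by (rule fvb_word_kernel_word)
  show "\<not> fvb_eq n fvb_kernel_word []" by (rule fvb_kernel_word_nontrivial)
  fix g assume g: "g \<in> free_gens n"
  show "free_eq n (theta_word fvb_kernel_word g) [pos g]"
  proof (cases "fgen_idx g \<ge> 4")
    case True
    then show ?thesis by (simp add: theta_kernel_word_far free_eq_def pres_eq.refl)
  next
    case False
    then have "g \<in> {X 1, X 2, X 3, Y 1, Y 2, Y 3}"
      using g by (cases g) (auto simp: free_gens_def)
    then have "free_reduce (theta_word fvb_kernel_word g) = [pos g]"
      and "\<forall>l \<in> set (theta_word fvb_kernel_word g). fst l \<in> free_gens n"
      using theta_kernel_word_near assms by (auto simp: free_gens_def)
    then show ?thesis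
      using pres_eq_free_reduce[where R = "{}"] by (force simp: free_eq_def)
  qed
qed

end
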